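(* For an integer $n>1$ define, for every integer $1<r<n$, $$E^{BW,P}_n(r)=\frac{2r(r-1)}{n^2}\sum_{k=r+1}^{n}\frac{n+k}{(k-1)(k-2)},$$ and let $\mathcal{M}(n)$ be a value of $r$ at which $E^{BW,P}_n$ attains its maximum. Let $$\vartheta=\frac{1}{2W\!\left(\frac{e^{3/2}}{2}\right)}=0.552001\dots,$$ the solution of $1-3x-2x\log x=0$. Then (i) $\lim_{n\to\infty}\mathcal{M}(n)/n=\vartheta$; (ii) $\lim_{n\to\infty}E^{BW,P}_n(\mathcal{M}(n))=\lim_{n\to\infty}E^{BW,P}_n(\lfloor n\vartheta\rfloor)=\vartheta(1+\vartheta)=0.8567\dots$.
   Context: $W$ denotes the principal (main) branch of the Lambert $W$ function, i.e. the inverse of $z\mapsto ze^z$ on $[-1,\infty)$. *)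

theory Defs
  imports Complex_Main
begin

definition lambertW :: "real \<Rightarrow> real" where
  "lambertW y = (THE w. w \<ge> -1 \<and> w * exp w = y)"

definition EBWP :: "nat \<Rightarrow> nat \<Rightarrow> real" where
  "EBWP n r = 2 * real r * (real r - 1) / (real n)^2 *
     (\<Sum>k = r+1..n. (real n + real k) / ((real k - 1) * (real k - 2)))"

definition vartheta :: real where
  "vartheta = 1 / (2 * lambertW (exp (3/2) / 2))"

end

theory Submission
  imports Defs
begin

text \<open>
  Splitting the summand into partial fractions,
  \<open>(n + k)/((k-1)(k-2)) = (n+1)(1/(k-2) - 1/(k-1)) + 1/(k-2)\<close>,
  telescopes the sum into \<open>(n+1)(1/(r-1) - 1/(n-1)) + H\<^sub>n\<^sub>-\<^sub>2 - H\<^sub>r\<^sub>-\<^sub>2\<close>.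
  Comparing the harmonic segment with \<open>ln (n/r)\<close> gives \<open>E\<^sub>n(r) = F(r/n) + O(1/n)\<close>
  uniformly in \<open>r\<close>, where \<open>F(x) = 2x(1-x) - 2x\<^sup>2 ln x\<close>. Since
  \<open>F'(x) = 2(1 - 3x - 2x ln x)\<close> changes sign exactly once, at \<open>\<vartheta>\<close>, \<open>F\<close> has the
  strict global maximum \<open>F(\<vartheta>) = \<vartheta>(1+\<vartheta>)\<close> on \<open>(0,\<infinity>)\<close>. Hence both
  \<open>E\<^sub>n(\<lfloor>n\<vartheta>\<rfloor>)\<close> and the maximum value \<open>E\<^sub>n(\<M>(n))\<close> tend to \<open>F(\<vartheta>)\<close>,
  which forces \<open>\<M>(n)/n \<rightarrow> \<vartheta>\<close>.
\<close>

lemma strict_mono_on_times_exp: "strict_mono_on {-1..} (\<lambda>w::real. w * exp w)"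
proof (rule strict_mono_onI)
  fix a b :: real
  assume "a \<in> {-1..}" "b \<in> {-1..}" "a < b"
  have deriv: "DERIV (\<lambda>w. w * exp w) x :> (1 + x) * exp x" for x :: real
    by (auto intro!: derivative_eq_intros simp: algebra_simps)
  show "a * exp a < b * exp b"
  proof (rule DERIV_pos_imp_increasing_open[OF \<open>a < b\<close>])
    fix x assume "a < x" "x < b"
    then have "0 < (1 + x) * exp x"
      using \<open>a \<in> {-1..}\<close> by simp
    with deriv show "\<exists>y. DERIV (\<lambda>w. w * exp w) x :> y \<and> 0 < y"
      by blast
  qed (intro continuous_intros)
qed

lemma lambertW_times_exp:
  assumes "-1 \<le> w"
  shows "lambertW (w * exp w) = w"
  unfolding lambertW_def
proof (rule the_equality)
  fix v assume "v \<ge> -1 \<and> v * exp v = w * exp w"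
  then show "v = w"
    using strict_mono_on_eqD[OF strict_mono_on_times_exp, of v w] assms by simp
qed (use assms in auto)

lemma vartheta_eq_inverse_double_root:
  obtains w where "1/2 < w" "w * exp w = exp (3/2) / 2" "vartheta = 1 / (2 * w)"
proof -
  have "\<exists>w\<ge>1/2. w \<le> 3/2 \<and> w * exp w = exp (3/2) / (2::real)"
    by (rule IVT[of "\<lambda>w. w * exp w"]) (auto intro: continuous_intros)
  then obtain w :: real where w: "1/2 \<le> w" "w * exp w = exp (3/2) / 2"
    by blast
  moreover have "w \<noteq> 1/2"
  proof
    assume "w = 1/2"
    with w(2) have "exp (1/2 :: real) = exp (3/2)"
      by simp
    then show False
      by simp
  qed
  moreover have "vartheta = 1 / (2 * w)"
    using lambertW_times_exp[of w] w unfolding vartheta_def by simp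
  ultimately show thesis
    by (intro that) auto
qed

lemma vartheta_bounds: "0 < vartheta" "vartheta < 1"
proof -
  obtain w where w: "1/2 < w" and \<theta>: "vartheta = 1 / (2 * w)"
    by (rule vartheta_eq_inverse_double_root)
  from w show "0 < vartheta" "vartheta < 1"
    unfolding \<theta> by (simp_all add: field_simps)
qed

lemma vartheta_equation: "1 - 3 * vartheta - 2 * vartheta * ln vartheta = 0"
proof -
  obtain w where w: "1/2 < w" "w * exp w = exp (3/2) / 2" and \<theta>: "vartheta = 1 / (2 * w)"
    by (rule vartheta_eq_inverse_double_root)
  have "ln w + w = 3/2 - ln 2"
    using arg_cong[OF w(2), of ln] w(1) by (simp add: ln_mult ln_div)
  then have "ln vartheta = w - 3/2"
    using w(1) unfolding \<theta> by (simp add: ln_div ln_mult)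
  then have "1 - 3 * vartheta - 2 * vartheta * ln vartheta = 1 - 2 * w * vartheta"
    by (simp only:) (simp add: algebra_simps)
  then show ?thesis
    using w(1) unfolding \<theta> by simp
qed

definition EBWP_limit :: "real \<Rightarrow> real" where
  "EBWP_limit x = 2 * x * (1 - x) - 2 * x\<^sup>2 * ln x"

lemma EBWP_limit_has_real_derivative:
  "0 < x \<Longrightarrow> (EBWP_limit has_real_derivative 2 * (1 - 3 * x - 2 * x * ln x)) (at x)"
  unfolding EBWP_limit_def
  by (rule derivative_eq_intros refl | simp)+ (simp add: field_simps power2_eq_square)

lemma continuous_on_EBWP_limit: "continuous_on {0<..} EBWP_limit"
  unfolding EBWP_limit_def by (auto intro!: continuous_intros)

text \<open>The sign of \<open>1 - 3x - 2x ln x\<close> is that of \<open>1/x - 3 - 2 ln x\<close>, a decreasing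
  function vanishing at \<open>\<vartheta>\<close>.\<close>
lemma critical_factor_sign:
  assumes "0 < x"
  shows "x < vartheta \<Longrightarrow> 0 < 1 - 3 * x - 2 * x * ln x"
    and "vartheta < x \<Longrightarrow> 1 - 3 * x - 2 * x * ln x < 0"
proof -
  have \<theta>: "1 / vartheta - 3 - 2 * ln vartheta = 0"
    using vartheta_equation vartheta_bounds by (simp add: field_simps)
  have factor: "1 - 3 * x - 2 * x * ln x = x * (1 / x - 3 - 2 * ln x)"
    using assms by (simp add: field_simps)
  show "0 < 1 - 3 * x - 2 * x * ln x" if "x < vartheta"
  proof -
    have "1 / vartheta < 1 / x" "ln x < ln vartheta"
      using that assms by (simp_all add: frac_less2)
    then show ?thesis
      unfolding factor using \<theta> assms by simp
  qed
  show "1 - 3 * x - 2 * x * ln x < 0" if "vartheta < x"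
  proof -
    have "1 / x < 1 / vartheta" "ln vartheta < ln x"
      using that vartheta_bounds by (simp_all add: frac_less2)
    then show ?thesis
      unfolding factor using \<theta> assms by (simp add: mult_pos_neg)
  qed
qed

lemma EBWP_limit_strict_mono_on: "strict_mono_on {0<..vartheta} EBWP_limit"
proof (rule strict_mono_onI)
  fix a b assume "a \<in> {0<..vartheta}" "b \<in> {0<..vartheta}" "a < b"
  have "\<exists>y. (EBWP_limit has_real_derivative y) (at x) \<and> 0 < y" if "a < x" "x < b" for x
    using that \<open>a \<in> _\<close> \<open>b \<in> _\<close> critical_factor_sign(1)[of x]
    by (intro exI[of _ "2 * (1 - 3 * x - 2 * x * ln x)"] conjI EBWP_limit_has_real_derivative) auto
  moreover have "continuous_on {a..b} EBWP_limit"
    using \<open>a \<in> _\<close> by (intro continuous_on_subset[OF continuous_on_EBWP_limit]) auto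
  ultimately show "EBWP_limit a < EBWP_limit b"
    by (rule DERIV_pos_imp_increasing_open[OF \<open>a < b\<close>])
qed

lemma EBWP_limit_strict_antimono_on: "strict_antimono_on {vartheta..} EBWP_limit"
proof (rule monotone_onI)
  fix a b assume "a \<in> {vartheta..}" "b \<in> {vartheta..}" "a < b"
  have "\<exists>y. (EBWP_limit has_real_derivative y) (at x) \<and> y < 0" if "a < x" "x < b" for x
    using that \<open>a \<in> _\<close> vartheta_bounds critical_factor_sign(2)[of x]
    by (intro exI[of _ "2 * (1 - 3 * x - 2 * x * ln x)"] conjI EBWP_limit_has_real_derivative) auto
  moreover have "continuous_on {a..b} EBWP_limit"
    using \<open>a \<in> _\<close> vartheta_bounds by (intro continuous_on_subset[OF continuous_on_EBWP_limit]) auto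
  ultimately show "EBWP_limit b < EBWP_limit a"
    by (rule DERIV_neg_imp_decreasing_open[OF \<open>a < b\<close>])
qed

lemma EBWP_limit_le_vartheta: "0 < x \<Longrightarrow> EBWP_limit x \<le> EBWP_limit vartheta"
  using strict_mono_onD[OF EBWP_limit_strict_mono_on, of x vartheta]
    monotone_onD[OF EBWP_limit_strict_antimono_on, of vartheta x] vartheta_bounds
  by (cases x vartheta rule: linorder_cases) auto

lemma EBWP_limit_vartheta: "EBWP_limit vartheta = vartheta * (1 + vartheta)"
proof -
  have "2 * vartheta\<^sup>2 * ln vartheta = vartheta * (2 * vartheta * ln vartheta)"
    by (simp add: power2_eq_square)
  also have "\<dots> = vartheta * (1 - 3 * vartheta)"
    using vartheta_equation by simp
  then show ?thesis
    unfolding EBWP_limit_def by (simp add: algebra_simps power2_eq_square)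
qed

lemma tendsto_vartheta_if_EBWP_limit_tendsto:
  assumes pos: "\<forall>\<^sub>F n in F. 0 < x n"
    and lim: "((\<lambda>n. EBWP_limit (x n)) \<longlongrightarrow> EBWP_limit vartheta) F"
  shows "(x \<longlongrightarrow> vartheta) F"
  unfolding tendsto_iff
proof (intro allI impI)
  fix e :: real assume "0 < e"
  define d where "d = min e (vartheta / 2)"
  have d: "0 < d" "d < vartheta" "d \<le> e"
    unfolding d_def using \<open>0 < e\<close> vartheta_bounds by auto
  define m where "m = max (EBWP_limit (vartheta - d)) (EBWP_limit (vartheta + d))"
  have "m < EBWP_limit vartheta"
    using strict_mono_onD[OF EBWP_limit_strict_mono_on, of "vartheta - d" vartheta]
      monotone_onD[OF EBWP_limit_strict_antimono_on, of vartheta "vartheta + d"] d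
    unfolding m_def by auto
  have far: "EBWP_limit y \<le> m" if "0 < y" "d \<le> \<bar>y - vartheta\<bar>" for y
  proof (cases "y \<le> vartheta")
    case True
    then have "y \<le> vartheta - d" using that by linarith
    then show ?thesis
      using strict_mono_onD[OF EBWP_limit_strict_mono_on, of y "vartheta - d"] that d
      unfolding m_def by (cases "y = vartheta - d") auto
  next
    case False
    then have "vartheta + d \<le> y" using that by linarith
    then show ?thesis
      using monotone_onD[OF EBWP_limit_strict_antimono_on, of "vartheta + d" y] d
      unfolding m_def by (cases "y = vartheta + d") auto
  qed
  show "\<forall>\<^sub>F n in F. dist (x n) vartheta < e"
    using order_tendstoD(1)[OF lim \<open>m < EBWP_limit vartheta\<close>] pos
  proof eventually_elim
    case (elim n)
    then have "\<bar>x n - vartheta\<bar> < d"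
      using far[of "x n"] by force
    then show ?case
      using d by (simp add: dist_real_def)
  qed
qed

lemma ln_add_one_minus_ln_bounds:
  assumes "0 < (x::real)"
  shows "1 / (x + 1) \<le> ln (x + 1) - ln x" and "ln (x + 1) - ln x \<le> 1 / x"
proof -
  have "ln (x / (x + 1)) \<le> x / (x + 1) - 1"
    using assms by (intro ln_le_minus_one) simp
  then show "1 / (x + 1) \<le> ln (x + 1) - ln x"
    using assms by (simp add: ln_div field_simps)
  have "ln ((x + 1) / x) \<le> (x + 1) / x - 1"
    using assms by (intro ln_le_minus_one) simp
  then show "ln (x + 1) - ln x \<le> 1 / x"
    using assms by (simp add: ln_div field_simps)
qed

lemma harmonic_segment_bounds:
  assumes "1 \<le> a" "a \<le> b"
  shows "ln (real b + 1) - ln (real a) \<le> (\<Sum>j=a..b. 1 / real j)"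
    and "(\<Sum>j=a..b. 1 / real j) \<le> 1 / real a + ln (real b) - ln (real a)"
proof -
  have "ln (real b + 1) - ln (real a) \<le> (\<Sum>j=a..b. 1 / real j) \<and>
        (\<Sum>j=a..b. 1 / real j) \<le> 1 / real a + ln (real b) - ln (real a)"
    using assms(2)
  proof (induction b rule: dec_induct)
    case base
    show ?case
      using ln_add_one_minus_ln_bounds(2)[of "real a"] assms(1) by simp
  next
    case (step n)
    have "0 < real n"
      using assms step by simp
    then show ?case
      using step.IH step.hyps ln_add_one_minus_ln_bounds[of "real n"]
        ln_add_one_minus_ln_bounds(2)[of "real n + 1"]
      by (simp add: sum.cl_ivl_Suc add.commute)
  qed
  then show "ln (real b + 1) - ln (real a) \<le> (\<Sum>j=a..b. 1 / real j)"
    and "(\<Sum>j=a..b. 1 / real j) \<le> 1 / real a + ln (real b) - ln (real a)"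
    by auto
qed

lemma sum_partial_fractions_closed_form:
  fixes c :: real
  assumes "2 \<le> r" "r \<le> m"
  shows "(\<Sum>k=r+1..m. (c + real k) / ((real k - 1) * (real k - 2))) =
    (c + 1) * (1 / (real r - 1) - 1 / (real m - 1)) + (\<Sum>j=r-1..m-2. 1 / real j)"
  using assms(2)
proof (induction m rule: dec_induct)
  case base
  then show ?case
    using assms(1) by simp
next
  case (step m)
  have m: "2 \<le> m" "real m - 1 \<noteq> 0" "real m \<noteq> 0"
    using assms step by auto
  have "(c + (real m + 1)) / (real m * (real m - 1)) =
      (c + 1) * (1 / (real m - 1) - 1 / real m) + 1 / (real m - 1)"
    using m by (simp add: divide_simps)
  moreover have "Suc m - 2 = Suc (m - 2)"
    using m by simp
  then have "(\<Sum>j=r-1..Suc m-2. 1 / real j) = (\<Sum>j=r-1..m-2. 1 / real j) + 1 / (real m - 1)"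
    using step m by (simp add: sum.cl_ivl_Suc of_nat_diff)
  ultimately show ?case
    using step by (simp add: sum.cl_ivl_Suc algebra_simps)
qed

lemma EBWP_eq_harmonic_segment:
  assumes "1 < r" "r < n"
  shows "EBWP n r = 2 * real r * (real n + 1) * (real n - real r) / ((real n)\<^sup>2 * (real n - 1))
    + 2 * real r * (real r - 1) / (real n)\<^sup>2 * (\<Sum>j=r-1..n-2. 1 / real j)"
proof -
  have nz: "real r - 1 \<noteq> 0" "real n - 1 \<noteq> 0"
    using assms by auto
  have "1 / (real r - 1) - 1 / (real n - 1) = (real n - real r) / ((real r - 1) * (real n - 1))"
    using nz by (simp add: divide_simps)
  then have "2 * real r * (real r - 1) / (real n)\<^sup>2 * ((real n + 1) * (1 / (real r - 1) - 1 / (real n - 1)))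
      = 2 * real r * (real n + 1) * (real n - real r) / ((real n)\<^sup>2 * (real n - 1))"
    using nz by simp
  moreover have "(\<Sum>k=r+1..n. (real n + real k) / ((real k - 1) * (real k - 2))) =
      (real n + 1) * (1 / (real r - 1) - 1 / (real n - 1)) + (\<Sum>j=r-1..n-2. 1 / real j)"
    using sum_partial_fractions_closed_form[of r n "real n"] assms by simp
  ultimately show ?thesis
    unfolding EBWP_def by (simp add: distrib_left)
qed

lemma harmonic_segment_ln_bounds:
  assumes "1 < r" "r < n"
  shows "ln (real n) - ln (real r) \<le> (\<Sum>j=r-1..n-2. 1 / real j)"
    and "(\<Sum>j=r-1..n-2. 1 / real j) \<le> ln (real n) - ln (real r) + 2 / (real r - 1)"
proof -
  have r: "real (r - 1) = real r - 1" and n: "real (n - 2) = real n - 2"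
    using assms by (simp_all add: of_nat_diff)
  have "real n / real r \<le> (real n - 1) / (real r - 1)"
    using assms by (simp add: field_simps)
  then have "ln (real n / real r) \<le> ln ((real n - 1) / (real r - 1))"
    using assms by (subst ln_le_cancel_iff) auto
  then have "ln (real n) - ln (real r) \<le> ln (real n - 1) - ln (real r - 1)"
    using assms by (simp add: ln_div)
  moreover have "ln (real n - 1) - ln (real r - 1) \<le> (\<Sum>j=r-1..n-2. 1 / real j)"
    using harmonic_segment_bounds(1)[of "r - 1" "n - 2"] assms unfolding r n by simp
  ultimately show "ln (real n) - ln (real r) \<le> (\<Sum>j=r-1..n-2. 1 / real j)"
    by linarith
  have "ln (real r) - ln (real r - 1) \<le> 1 / (real r - 1)"
    using ln_add_one_minus_ln_bounds(2)[of "real r - 1"] assms by simp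
  moreover have "ln (real n - 2) \<le> ln (real n)"
    using assms by simp
  moreover have "(\<Sum>j=r-1..n-2. 1 / real j) \<le> 1 / (real r - 1) + ln (real n - 2) - ln (real r - 1)"
    using harmonic_segment_bounds(2)[of "r - 1" "n - 2"] assms unfolding r n by simp
  ultimately show "(\<Sum>j=r-1..n-2. 1 / real j) \<le> ln (real n) - ln (real r) + 2 / (real r - 1)"
    by simp
qed

lemma EBWP_minus_EBWP_limit:
  assumes "1 < r" "r < n"
  defines "R \<equiv> real r" and "N \<equiv> real n"
  shows "EBWP n r - EBWP_limit (R / N) = 4 * R * (N - R) / (N\<^sup>2 * (N - 1))
    + 2 * (R * (R - 1) * (\<Sum>j=r-1..n-2. 1 / real j) - R\<^sup>2 * (ln N - ln R)) / N\<^sup>2"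
proof -
  have R: "2 \<le> R" "R + 1 \<le> N"
    using assms unfolding R_def N_def by simp_all
  have limit: "EBWP_limit (R / N) = 2 * R * (N - R) / N\<^sup>2 + 2 * R\<^sup>2 * (ln N - ln R) / N\<^sup>2"
    unfolding EBWP_limit_def using R by (simp add: ln_div field_simps power2_eq_square)
  have "N - 1 \<noteq> 0" "N \<noteq> 0"
    using R by auto
  then show ?thesis
    unfolding EBWP_eq_harmonic_segment[OF assms(1,2)] limit R_def[symmetric] N_def[symmetric]
    by (simp add: field_simps power2_eq_square)
qed

lemma EBWP_approx_EBWP_limit:
  assumes "1 < r" "r < n"
  shows "\<bar>EBWP n r - EBWP_limit (real r / real n)\<bar> \<le> 6 / real n"
proof -
  define R N where "R = real r" and "N = real n"
  define S L where "S = (\<Sum>j=r-1..n-2. 1 / real j)" and "L = ln N - ln R"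
  define T X where "T = 4 * R * (N - R) / (N\<^sup>2 * (N - 1))" and "X = R * (R - 1) * S - R\<^sup>2 * L"
  have R: "2 \<le> R" "R + 1 \<le> N"
    using assms unfolding R_def N_def by simp_all
  have "4 * R * (N - R) \<le> N\<^sup>2"
    using sum_squares_ge_zero[of "N - 2 * R" 0] by (simp add: power2_eq_square algebra_simps)
  then have "T \<le> N\<^sup>2 / (N\<^sup>2 * (N - 1))"
    unfolding T_def using R by (intro divide_right_mono) auto
  also have "\<dots> \<le> 2 / N"
    using R by (simp add: field_simps)
  finally have T: "0 \<le> T" "T \<le> 2 / N"
    unfolding T_def using R by simp_all
  have "0 \<le> S - L" "(R - 1) * (S - L) \<le> 2"
    using harmonic_segment_ln_bounds[OF assms] R unfolding S_def L_def R_def N_def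
    by (simp_all add: field_simps)
  then have SL: "0 \<le> R * (R - 1) * (S - L)" "R * (R - 1) * (S - L) \<le> 2 * R"
    using R mult_left_mono[of "(R - 1) * (S - L)" 2 R] by (simp_all add: mult.assoc)
  have "L \<le> N / R - 1"
    using ln_le_minus_one[of "N / R"] R unfolding L_def by (simp add: ln_div)
  then have RL: "0 \<le> R * L" "R * L \<le> N - R"
    using R unfolding L_def by (simp_all add: field_simps)
  have "X = R * (R - 1) * (S - L) - R * L"
    unfolding X_def by (simp add: algebra_simps power2_eq_square)
  then have "\<bar>X\<bar> \<le> 2 * N"
    using SL RL R unfolding abs_le_iff by linarith
  then have "\<bar>2 * X / N\<^sup>2\<bar> \<le> 2 * (2 * N) / N\<^sup>2"
    by (simp add: abs_mult divide_right_mono)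
  also have "\<dots> = 4 / N"
    using R by (simp add: power2_eq_square)
  finally have "\<bar>2 * X / N\<^sup>2\<bar> \<le> 4 / N" .
  moreover have "EBWP n r - EBWP_limit (R / N) = T + 2 * X / N\<^sup>2"
    using EBWP_minus_EBWP_limit[OF assms] unfolding T_def X_def S_def L_def R_def N_def .
  ultimately have "\<bar>EBWP n r - EBWP_limit (R / N)\<bar> \<le> 2 / N + 4 / N"
    using T by linarith
  then show ?thesis
    unfolding R_def N_def by simp
qed

lemma eventually_one_less_less_if_ratio_tendsto:
  assumes lim: "(\<lambda>n. real (r n) / real n) \<longlonglongrightarrow> x" and x: "0 < x" "x < 1"
  shows "\<forall>\<^sub>F n in sequentially. 1 < r n \<and> r n < n"
proof -
  have "filterlim (\<lambda>n. real (r n) / real n * real n) at_top sequentially"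
    by (rule filterlim_tendsto_pos_mult_at_top[OF lim x(1) filterlim_real_sequentially])
  then have "\<forall>\<^sub>F n in sequentially. 1 < real (r n) / real n * real n"
    by (simp add: filterlim_at_top_dense)
  moreover have "\<forall>\<^sub>F n in sequentially. real (r n) / real n < 1"
    using order_tendstoD(2)[OF lim x(2)] .
  ultimately show ?thesis
    using eventually_gt_at_top[of 0]
    by eventually_elim (auto simp: field_simps split: if_splits)
qed

lemma EBWP_tendsto_EBWP_limit:
  assumes lim: "(\<lambda>n. real (r n) / real n) \<longlonglongrightarrow> x" and x: "0 < x" "x < 1"
  shows "(\<lambda>n. EBWP n (r n)) \<longlonglongrightarrow> EBWP_limit x"
proof -
  have "(\<lambda>n. EBWP n (r n) - EBWP_limit (real (r n) / real n)) \<longlonglongrightarrow> 0"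
  proof (rule tendsto_0_le[OF lim_const_over_n[of 6], where K = 1])
    show "\<forall>\<^sub>F n in sequentially.
        norm (EBWP n (r n) - EBWP_limit (real (r n) / real n)) \<le> norm (6 / real n) * 1"
      using eventually_one_less_less_if_ratio_tendsto[OF assms]
      by eventually_elim (simp add: EBWP_approx_EBWP_limit)
  qed
  moreover have "(\<lambda>n. EBWP_limit (real (r n) / real n)) \<longlonglongrightarrow> EBWP_limit x"
    using continuous_on_EBWP_limit x order_tendstoD(1)[OF lim x(1)]
    by (intro continuous_on_tendsto_compose[OF _ lim]) auto
  ultimately show ?thesis
    by (rule Lim_transform[rotated])
qed

lemma tendsto_nat_floor_mult_div:
  assumes "0 \<le> (c::real)"
  shows "(\<lambda>n. real (nat \<lfloor>real n * c\<rfloor>) / real n) \<longlonglongrightarrow> c"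
proof (rule tendsto_sandwich)
  have nat_floor: "real (nat \<lfloor>real n * c\<rfloor>) = of_int \<lfloor>real n * c\<rfloor>" for n
    using assms by simp
  have floor: "real n * c - 1 \<le> real (nat \<lfloor>real n * c\<rfloor>)"
    "real (nat \<lfloor>real n * c\<rfloor>) \<le> real n * c" for n
    unfolding nat_floor by linarith+
  show "\<forall>\<^sub>F n in sequentially. c - 1 / real n \<le> real (nat \<lfloor>real n * c\<rfloor>) / real n"
    using eventually_gt_at_top[of 0]
  proof eventually_elim
    case (elim n)
    then have "(real n * c - 1) / real n \<le> real (nat \<lfloor>real n * c\<rfloor>) / real n"
      using floor by (intro divide_right_mono) auto
    with elim show ?case
      by (simp add: diff_divide_distrib)
  qed
  show "\<forall>\<^sub>F n in sequentially. real (nat \<lfloor>real n * c\<rfloor>) / real n \<le> c"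
    using eventually_gt_at_top[of 0]
    by eventually_elim (use floor in \<open>auto simp: field_simps\<close>)
  show "(\<lambda>n. c - 1 / real n) \<longlonglongrightarrow> c"
    using tendsto_diff[OF tendsto_const lim_const_over_n[of 1]] by simp
qed simp

lemma EBWP_maximiser_tendsto:
  assumes M_max: "\<forall>\<^sub>F n in sequentially. 1 < M n \<and> M n < n \<and>
    (\<forall>r. 1 < r \<and> r < n \<longrightarrow> EBWP n r \<le> EBWP n (M n))"
  shows "(\<lambda>n. EBWP n (M n)) \<longlonglongrightarrow> EBWP_limit vartheta"
proof (rule tendsto_sandwich)
  define r0 where "r0 n = nat \<lfloor>real n * vartheta\<rfloor>" for n
  have r0_ratio: "(\<lambda>n. real (r0 n) / real n) \<longlonglongrightarrow> vartheta"
    unfolding r0_def using tendsto_nat_floor_mult_div vartheta_bounds by simp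
  show "\<forall>\<^sub>F n in sequentially. EBWP n (r0 n) \<le> EBWP n (M n)"
    using M_max eventually_one_less_less_if_ratio_tendsto[OF r0_ratio vartheta_bounds]
    by eventually_elim blast
  show "(\<lambda>n. EBWP n (r0 n)) \<longlonglongrightarrow> EBWP_limit vartheta"
    using EBWP_tendsto_EBWP_limit[OF r0_ratio vartheta_bounds] .
  show "\<forall>\<^sub>F n in sequentially. EBWP n (M n) \<le> EBWP_limit vartheta + 6 / real n"
    using M_max
  proof eventually_elim
    case (elim n)
    then have "EBWP_limit (real (M n) / real n) \<le> EBWP_limit vartheta"
      by (intro EBWP_limit_le_vartheta) simp
    with elim show ?case
      using EBWP_approx_EBWP_limit[of "M n" n] unfolding abs_le_iff by linarith
  qed
  show "(\<lambda>n. EBWP_limit vartheta + 6 / real n) \<longlonglongrightarrow> EBWP_limit vartheta"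
    using tendsto_add[OF tendsto_const lim_const_over_n[of 6]] by simp
qed

lemma EBWP_maximiser_ratio_tendsto:
  assumes M_max: "\<forall>\<^sub>F n in sequentially. 1 < M n \<and> M n < n \<and>
    (\<forall>r. 1 < r \<and> r < n \<longrightarrow> EBWP n r \<le> EBWP n (M n))"
  shows "(\<lambda>n. real (M n) / real n) \<longlonglongrightarrow> vartheta"
proof (rule tendsto_vartheta_if_EBWP_limit_tendsto)
  show "\<forall>\<^sub>F n in sequentially. 0 < real (M n) / real n"
    using M_max by eventually_elim simp
  show "(\<lambda>n. EBWP_limit (real (M n) / real n)) \<longlonglongrightarrow> EBWP_limit vartheta"
  proof (rule tendsto_sandwich)
    show "\<forall>\<^sub>F n in sequentially. EBWP n (M n) - 6 / real n \<le> EBWP_limit (real (M n) / real n)"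
      using M_max
    proof eventually_elim
      case (elim n)
      then show ?case
        using EBWP_approx_EBWP_limit[of "M n" n] unfolding abs_le_iff by linarith
    qed
    show "\<forall>\<^sub>F n in sequentially. EBWP_limit (real (M n) / real n) \<le> EBWP_limit vartheta"
      using M_max by eventually_elim (simp add: EBWP_limit_le_vartheta)
    show "(\<lambda>n. EBWP n (M n) - 6 / real n) \<longlonglongrightarrow> EBWP_limit vartheta"
      using tendsto_diff[OF EBWP_maximiser_tendsto[OF M_max] lim_const_over_n[of 6]] by simp
  qed simp
qed

theorem theorem4:
  fixes M :: "nat \<Rightarrow> nat"
  assumes M_max: "\<And>n. n \<ge> 3 \<Longrightarrow> 1 < M n \<and> M n < n \<and>
                     (\<forall>r. 1 < r \<and> r < n \<longrightarrow> EBWP n r \<le> EBWP n (M n))"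
  shows "1 - 3 * vartheta - 2 * vartheta * ln vartheta = 0
     \<and> (\<lambda>n. real (M n) / real n) \<longlonglongrightarrow> vartheta
     \<and> (\<lambda>n. EBWP n (M n)) \<longlonglongrightarrow> vartheta * (1 + vartheta)
     \<and> (\<lambda>n. EBWP n (nat \<lfloor>real n * vartheta\<rfloor>)) \<longlonglongrightarrow> vartheta * (1 + vartheta)"
proof -
  have "\<forall>\<^sub>F n in sequentially. 1 < M n \<and> M n < n \<and>
      (\<forall>r. 1 < r \<and> r < n \<longrightarrow> EBWP n r \<le> EBWP n (M n))"
    using eventually_ge_at_top[of 3] by eventually_elim (rule M_max)
  note M_max = this
  have "(\<lambda>n. EBWP n (nat \<lfloor>real n * vartheta\<rfloor>)) \<longlonglongrightarrow> EBWP_limit vartheta"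
    using vartheta_bounds
    by (intro EBWP_tendsto_EBWP_limit tendsto_nat_floor_mult_div) simp_all
  then show ?thesis
    using vartheta_equation EBWP_maximiser_tendsto[OF M_max] EBWP_maximiser_ratio_tendsto[OF M_max]
    unfolding EBWP_limit_vartheta by simp
qed

end
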